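(* Let $a\in\mathbb Z^+$ and let $\psi:\mathbb Z\to\mathbb Z$ be a function such that for every $k\in\mathbb Z$ and every $j\in\{1,\dots,a\}$, $\psi(k)\equiv\psi(-k)\pmod{3^a}$ and $\psi(k+3^j)\equiv\psi(k)\pmod{3^j}$. For $1\le k\le 3^a-1$ set $$\Psi_a(k)=\frac{\psi(3^a-k)-\psi(k)}{3^a}+\frac{3^a-1}{2}-k .$$ Then $$\frac{1}{2[3^a]_q^2}\sum_{k=1}^{3^a-1}q^{\psi(k)}\left(\frac{k}{3}\right)\begin{bmatrix}2\cdot 3^a\\k\end{bmatrix}_q\equiv \sum_{\substack{1\le k\le 3^a-1\\ k\equiv1\ (\mathrm{mod}\ 3)}} q^{\psi(k)-\frac{k(k-1)}{2}}\,\frac{(-1)^{k-1}}{[k]_q^2}\bigl(1+\Psi_a(k)(1-q^k)\bigr)\pmod{\Phi_{3^a}(q)}.$$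
   Context: $\left(\frac{k}{3}\right)$ is the Legendre symbol: $0$ if $3\mid k$, $1$ if $k\equiv1\pmod 3$, $-1$ if $k\equiv 2\pmod 3$. For $n\in\mathbb N$, $[n]_q=\frac{1-q^n}{1-q}=\sum_{0\le j<n}q^j$. For $n,k\in\mathbb N$ the $q$-binomial coefficient is $\begin{bmatrix}n\\k\end{bmatrix}_q=\frac{[n]_q[n-1]_q\cdots[n-k+1]_q}{[1]_q[2]_q\cdots[k]_q}$ if $0<k\le n$, equal to $1$ if $k=0$, and $0$ if $k>n$. $\Phi_{3^a}(q)=\frac{q^{3^a}-1}{q^{3^{a-1}}-1}$ is the $3^a$-th cyclotomic polynomial. Congruence convention: for rational functions $A,B$ in $q$ with rational coefficients (Laurent polynomials allowed) and a nonconstant polynomial $M\in\mathbb Z[q]$, $A\equiv B\pmod{M}$ means $A-B=M\cdot C$ for some rational function $C$ whose reduced denominator is coprime to $M$ in $\mathbb Q[q]$. (The sum on the left is divisible by $[3^a]_q^2$, and the $[k]_q$ with $3\nmid k$ are coprime to $\Phi_{3^a}(q)$.) *)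

theory Defs
  imports "HOL-Computational_Algebra.Computational_Algebra" "HOL-Computational_Algebra.Field_as_Ring" "HOL-Number_Theory.Number_Theory"
begin

type_synonym rfun = "rat poly fract"

definition qvar :: rfun where
  "qvar = to_fract [:0, 1:]"

definition rconst :: "rat \<Rightarrow> rfun" where
  "rconst c = to_fract [:c:]"

definition qint :: "nat \<Rightarrow> rfun" where
  "qint n = (\<Sum>j<n. qvar ^ j)"

definition qbinom :: "nat \<Rightarrow> nat \<Rightarrow> rfun" where
  "qbinom n k =
     (if k = 0 then 1
      else if k > n then 0
      else (\<Prod>i<k. qint (n - i)) / (\<Prod>i\<in>{1..k}. qint i))"

text \<open>cyclotomic polynomial Phi_{3^a}(q) = (q^{3^a}-1)/(q^{3^{a-1}}-1), for a \<ge> 1\<close>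
definition Phi3 :: "nat \<Rightarrow> rat poly" where
  "Phi3 a = ([:0, 1:] ^ (3 ^ a) - 1) div ([:0, 1:] ^ (3 ^ (a - 1)) - 1)"

definition qcong_mod :: "rfun \<Rightarrow> rfun \<Rightarrow> rat poly \<Rightarrow> bool" where
  "qcong_mod A B M \<longleftrightarrow>
     (\<exists>C. A - B = to_fract M * C \<and> coprime (snd (quot_of_fract C)) M)"

end

theory Submission
  imports Defs
begin

(*
  Write N = 3^a, t = [N]_q, T = [2N]_q and Phi = Phi3 a.  All congruences are taken in the
  ring of rational functions whose denominator is coprime to Phi (functions "local at Phi"),
  modulo powers of Phi.  Since [N]_q = Phi [N/3]_q, both t and T = t (1 + q^N) vanish modulo
  Phi, while q and every [i]_q with 0 < i < N are invertible there.

  (1) Each summand.  [2N choose k]_q = T q^(-k(k-1)/2) prod_{0<i<k} (T/[i] - 1) / [k], and the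
      product linearises to (-1)^(k-1) (1 - T H_k) modulo Phi^2, where H_k = sum_{0<i<k} 1/[i].
      So the k-th summand is T w_k - T^2 w_k H_k modulo Phi^3 (cong_summand).
  (2) Pairing.  Summands with 3 | k vanish; k = 1 (mod 3) is paired with N - k.  Using
      [N - j] = q^(-j) (t - [j]), q^(N e) = 1 + e (q - 1) t modulo Phi^2 and
      psi(N - k) = psi(k) (mod N), one gets w_k + w_(N-k) = -t X_k modulo Phi^2 and
      w_k H_k + w_(N-k) H_(N-k) = -Y_k modulo Phi; as T = t (2 + (q - 1) t), the pair
      contributes 2 t^2 (2 Y_k - X_k) = 2 t^2 R_k modulo Phi^3 (cong_summand_pair), where R_k
      is the k-th term of the right-hand side.
  (3) Dividing the summed congruence by 2 t^2 = 2 Phi^2 [N/3]_q^2 gives the claim modulo Phi.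
*)

section \<open>Cyclotomic facts about \<open>Phi3\<close>\<close>

text \<open>The indeterminate \<open>q\<close> as a polynomial (kept folded so that the simplifier does not
  turn products with it into \<open>pCons\<close> terms) and the q-integer \<open>[n]_q\<close> as a polynomial.\<close>
definition qX :: "rat poly" where
  "qX = [:0, 1:]"

definition qint_poly :: "nat \<Rightarrow> rat poly" where
  "qint_poly n = (\<Sum>j<n. qX ^ j)"

lemma qint_poly_geom: "(qX - 1) * qint_poly n = qX ^ n - 1"
  by (induction n) (auto simp: qint_poly_def algebra_simps)

lemma qX_sub_one_ne0: "qX - 1 \<noteq> 0"
  by (simp add: qX_def one_pCons)

text \<open>Evaluating at \<open>q = 1\<close> gives \<open>n\<close>, so \<open>[n]_q\<close> is a nonzero polynomial for \<open>n > 0\<close>.\<close>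
lemma qint_poly_ne0: "0 < n \<Longrightarrow> qint_poly n \<noteq> 0"
proof
  assume "0 < n" "qint_poly n = 0"
  then have "poly (qint_poly n) 1 = 0" by simp
  moreover have "poly (qint_poly n) 1 = of_nat n" by (simp add: qint_poly_def qX_def poly_sum)
  ultimately show False using \<open>0 < n\<close> by simp
qed

lemma power_sub_one_dvd:
  fixes x :: "'a::comm_ring_1"
  shows "x ^ n - 1 dvd x ^ (n * m) - 1"
proof (induction m)
  case (Suc m)
  have "x ^ (n * Suc m) - 1 = x ^ n * (x ^ (n * m) - 1) + (x ^ n - 1)"
    by (simp add: power_add algebra_simps)
  then show ?case by (simp only:) (intro dvd_add dvd_mult Suc.IH dvd_refl)
qed simp

lemma dvd_power_sub_one_gcd:
  fixes x d :: "'a::comm_ring_1"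
  shows "d dvd x ^ m - 1 \<Longrightarrow> d dvd x ^ n - 1 \<Longrightarrow> d dvd x ^ gcd m n - 1"
proof (induction m n rule: gcd_nat_induct)
  case (step m n)
  have "x ^ m = x ^ (m mod n) * x ^ (n * (m div n))"
    by (metis div_mult_mod_eq mult.commute power_add)
  then have split: "x ^ m - 1 = x ^ (m mod n) * (x ^ (n * (m div n)) - 1) + (x ^ (m mod n) - 1)"
    by (simp add: algebra_simps)
  have "d dvd x ^ (n * (m div n)) - 1"
    using step.prems(2) power_sub_one_dvd dvd_trans by blast
  then have "d dvd x ^ (m mod n) - 1"
    using step.prems(1) split by (metis add_diff_cancel_left' dvd_diff dvd_mult)
  then show ?case
    using step.IH step.prems(2) step.hyps by (metis gcd_red_nat)
qed simp

lemma is_unit_numeral_poly: "is_unit (numeral n :: rat poly)"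
proof -
  have "(numeral n :: rat poly) = [:numeral n:]" by (simp add: numeral_poly)
  moreover have "is_unit (numeral n :: rat)"
    by (rule dvdI[of _ _ "1 / numeral n"]) simp
  ultimately show ?thesis by (simp only: is_unit_const_poly_iff)
qed

lemma Phi3_eq:
  assumes "0 < a"
  shows "qX ^ 3 ^ a - 1 = Phi3 a * (qX ^ 3 ^ (a - 1) - 1)"
    and "Phi3 a = 1 + qX ^ 3 ^ (a - 1) + qX ^ (2 * 3 ^ (a - 1))"
proof -
  define y :: "rat poly" where "y = qX ^ 3 ^ (a - 1)"
  have y3: "qX ^ 3 ^ a = y ^ 3" and y2: "qX ^ (2 * 3 ^ (a - 1)) = y ^ 2"
    using assms unfolding y_def by (cases a; simp add: power_mult[symmetric] mult.commute)+
  have "y - 1 \<noteq> 0"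
  proof
    assume "y - 1 = 0"
    then have "degree y = degree (1 :: rat poly)" by simp
    then show False by (simp add: y_def qX_def degree_power_eq)
  qed
  moreover have factor: "y ^ 3 - 1 = (1 + y + y ^ 2) * (y - 1)"
    by (simp add: algebra_simps power2_eq_square power3_eq_cube)
  ultimately have "Phi3 a = 1 + y + y ^ 2"
    unfolding Phi3_def qX_def[symmetric] y3[symmetric] y_def[symmetric] by simp
  then show "Phi3 a = 1 + qX ^ 3 ^ (a - 1) + qX ^ (2 * 3 ^ (a - 1))"
    unfolding y2 y_def .
  then show "qX ^ 3 ^ a - 1 = Phi3 a * (qX ^ 3 ^ (a - 1) - 1)"
    unfolding y3 y2 factor y_def[symmetric] by simp
qed

text \<open>\<open>Phi3 a\<close> divides the nonzero polynomial \<open>q^(3^a) - 1\<close>, so it is nonzero.\<close>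
lemma Phi3_ne0: "0 < a \<Longrightarrow> Phi3 a \<noteq> 0"
  using Phi3_eq(1)[of a] qint_poly_geom[of "3 ^ a"] qint_poly_ne0[of "3 ^ a"] qX_sub_one_ne0
  by auto

lemma qint_poly_Phi3: "0 < a \<Longrightarrow> qint_poly (3 ^ a) = Phi3 a * qint_poly (3 ^ (a - 1))"
proof -
  assume "0 < a"
  have "(qX - 1) * qint_poly (3 ^ a) = (qX - 1) * (Phi3 a * qint_poly (3 ^ (a - 1)))"
    unfolding qint_poly_geom Phi3_eq(1)[OF \<open>0 < a\<close>] mult.left_commute[of _ "Phi3 a"] qint_poly_geom ..
  then show ?thesis using qX_sub_one_ne0 by simp
qed

text \<open>\<open>q\<close> is invertible modulo \<open>Phi3 a\<close>, since \<open>Phi3 a\<close> divides \<open>q^(3^a) - 1\<close>.\<close>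
lemma coprime_X_Phi3: "0 < a \<Longrightarrow> coprime qX (Phi3 a)"
proof (rule coprimeI)
  fix d assume "0 < a" "d dvd qX" "d dvd Phi3 a"
  then have "d dvd qX ^ 3 ^ a" and "d dvd qX ^ 3 ^ a - 1"
    using Phi3_eq(1) by (auto intro: dvd_trans dvd_power)
  then have "d dvd qX ^ 3 ^ a - (qX ^ 3 ^ a - 1)" by (rule dvd_diff)
  then show "is_unit d" by simp
qed

text \<open>For \<open>0 < i < 3^a\<close> the polynomials \<open>[i]_q\<close> and \<open>Phi3 a\<close> are coprime: a common divisor
  divides \<open>q^gcd(i, 3^a) - 1\<close>, hence \<open>q^M - 1\<close>, hence \<open>Phi3 a - (q^M - 1)(q^M + 2) = 3\<close>.\<close>
lemma coprime_qint_poly_Phi3: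
  assumes "0 < a" "0 < i" "i < 3 ^ a"
  shows "coprime (qint_poly i) (Phi3 a)"
proof (rule coprimeI)
  fix d assume d_qint: "d dvd qint_poly i" and d_Phi: "d dvd Phi3 a"
  define y :: "rat poly" where "y = qX ^ 3 ^ (a - 1)"
  have "d dvd qX ^ i - 1"
    using d_qint qint_poly_geom[of i] by (metis dvd_trans dvd_triv_right)
  moreover have "d dvd qX ^ 3 ^ a - 1"
    using d_Phi Phi3_eq(1)[OF assms(1)] by simp
  ultimately have d_gcd: "d dvd qX ^ gcd i (3 ^ a) - 1" by (rule dvd_power_sub_one_gcd)
  obtain e where e: "e \<le> a" "gcd i (3 ^ a) = 3 ^ e"
    using divides_primepow_nat[of 3 "gcd i (3 ^ a)" a] by auto
  have "(3::nat) ^ e < 3 ^ a" using e(2) assms(2,3) gcd_le1_nat[of i "3 ^ a"] by linarith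
  then have "gcd i (3 ^ a) dvd 3 ^ (a - 1)" unfolding e(2) by (intro le_imp_power_dvd) simp
  then have "d dvd y - 1"
    using d_gcd power_sub_one_dvd unfolding y_def by (metis dvd_def dvd_trans)
  moreover have "Phi3 a = 3 + (y - 1) * (y + 2)"
  proof -
    have "qX ^ (2 * 3 ^ (a - 1)) = y ^ 2" unfolding y_def by (simp add: power_mult[symmetric] mult.commute)
    then show ?thesis
      unfolding Phi3_eq(2)[OF assms(1)] y_def[symmetric] by (simp add: algebra_simps power2_eq_square)
  qed
  ultimately have "d dvd 3"
    using d_Phi by (metis add_diff_cancel_right' dvd_diff dvd_mult2)
  then show "is_unit d" using is_unit_numeral_poly by (rule dvd_unit_imp_unit)
qed

section \<open>Rational functions that are local at a polynomial, and congruences\<close>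

text \<open>For \<open>r = 1\<close> this is the congruence \<open>qcong_mod\<close> of the statement.\<close>
definition local_at :: "rat poly \<Rightarrow> rfun \<Rightarrow> bool" where
  "local_at P x \<longleftrightarrow> (\<exists>p s. s \<noteq> 0 \<and> coprime s P \<and> x = to_fract p / to_fract s)"

definition cong_at :: "rat poly \<Rightarrow> nat \<Rightarrow> rfun \<Rightarrow> rfun \<Rightarrow> bool" where
  "cong_at P r A B \<longleftrightarrow> (\<exists>C. local_at P C \<and> A - B = to_fract P ^ r * C)"

lemma local_at_to_fract [simp]: "local_at P (to_fract p)"
  unfolding local_at_def by (intro exI[of _ p] exI[of _ 1]) simp

lemma local_at_0 [simp]: "local_at P 0" and local_at_1 [simp]: "local_at P 1"
  using local_at_to_fract[of P 0] local_at_to_fract[of P 1] by simp_all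

lemma local_at_inverse: "s \<noteq> 0 \<Longrightarrow> coprime s P \<Longrightarrow> local_at P (1 / to_fract s)"
  unfolding local_at_def by (intro exI[of _ 1] exI[of _ s]) simp

lemma local_at_add: "local_at P x \<Longrightarrow> local_at P y \<Longrightarrow> local_at P (x + y)"
  and local_at_mult: "local_at P x \<Longrightarrow> local_at P y \<Longrightarrow> local_at P (x * y)"
proof -
  assume "local_at P x" "local_at P y"
  then obtain p1 s1 p2 s2 where h: "s1 \<noteq> 0" "coprime s1 P" "x = to_fract p1 / to_fract s1"
    "s2 \<noteq> 0" "coprime s2 P" "y = to_fract p2 / to_fract s2"
    unfolding local_at_def by blast
  have "x + y = to_fract (p1 * s2 + p2 * s1) / to_fract (s1 * s2)"
    and "x * y = to_fract (p1 * p2) / to_fract (s1 * s2)"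
    using h by (simp_all add: field_simps)
  then show "local_at P (x + y)" "local_at P (x * y)"
    unfolding local_at_def using h by (metis coprime_mult_left_iff mult_eq_0_iff)+
qed

lemma local_at_uminus: "local_at P x \<Longrightarrow> local_at P (- x)"
  using local_at_mult[OF local_at_to_fract[of P "-1"], of x] by simp

lemma local_at_diff: "local_at P x \<Longrightarrow> local_at P y \<Longrightarrow> local_at P (x - y)"
  using local_at_add[of P x "- y"] local_at_uminus[of P y] by simp

lemma local_at_power: "local_at P x \<Longrightarrow> local_at P (x ^ n)"
  by (induction n) (auto intro: local_at_mult)

lemma local_at_sum: "(\<And>i. i \<in> S \<Longrightarrow> local_at P (f i)) \<Longrightarrow> local_at P (sum f S)"
  by (induction S rule: infinite_finite_induct) (auto intro: local_at_add)

lemma to_fract_of_int: "to_fract (of_int z) = (of_int z :: rfun)"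
proof -
  have nat: "to_fract (of_nat n) = (of_nat n :: rfun)" for n by (induction n) simp_all
  show ?thesis by (cases z rule: int_cases) (simp_all add: nat)
qed

lemma local_at_of_int [simp]: "local_at P (of_int z)"
  using local_at_to_fract[of P "of_int z"] by (simp only: to_fract_of_int)

lemma local_at_of_nat [simp]: "local_at P (of_nat n)"
  using local_at_of_int[of P "int n"] by simp

lemma local_at_numeral [simp]: "local_at P (numeral n)"
  using local_at_of_nat[of P "numeral n"] by simp

text \<open>Nonzero rational constants are units, so halving preserves locality.\<close>
lemma local_at_half [simp]: "local_at P (1 / 2)"
proof -
  have "to_fract (2 :: rat poly) = 2"
    using to_fract_add[of "1 :: rat poly" 1] by simp
  then show ?thesis
    using local_at_inverse[of 2 P] is_unit_numeral_poly[of "num.Bit0 num.One"]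
    by (simp add: is_unit_left_imp_coprime)
qed

lemma cong_atI: "A - B = to_fract P ^ r * C \<Longrightarrow> local_at P C \<Longrightarrow> cong_at P r A B"
  unfolding cong_at_def by blast

lemma cong_atE:
  assumes "cong_at P r A B"
  obtains C where "local_at P C" "A - B = to_fract P ^ r * C"
  using assms unfolding cong_at_def by blast

lemma cong_at_refl [simp]: "cong_at P r A A"
  by (rule cong_atI[where C = 0]) simp_all

lemma cong_at_trans [trans]: "cong_at P r A B \<Longrightarrow> cong_at P r B C \<Longrightarrow> cong_at P r A C"
  and cong_at_add: "cong_at P r A B \<Longrightarrow> cong_at P r C D \<Longrightarrow> cong_at P r (A + C) (B + D)"
  and cong_at_diff: "cong_at P r A B \<Longrightarrow> cong_at P r C D \<Longrightarrow> cong_at P r (A - C) (B - D)"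
proof -
  assume "cong_at P r A B" "cong_at P r C D"
  then obtain X Y where X: "local_at P X" "A - B = to_fract P ^ r * X"
    and Y: "local_at P Y" "C - D = to_fract P ^ r * Y" by (meson cong_atE)
  have "A + C - (B + D) = to_fract P ^ r * (X + Y)" "A - C - (B - D) = to_fract P ^ r * (X - Y)"
    using X(2) Y(2) by (simp_all add: algebra_simps)
  then show "cong_at P r (A + C) (B + D)" "cong_at P r (A - C) (B - D)"
    using X(1) Y(1) by (auto elim!: cong_atI intro: local_at_add local_at_diff)
next
  assume "cong_at P r A B" "cong_at P r B C"
  then obtain X Y where X: "local_at P X" "A - B = to_fract P ^ r * X"
    and Y: "local_at P Y" "B - C = to_fract P ^ r * Y" by (meson cong_atE)
  then have "A - C = to_fract P ^ r * (X + Y)" by (simp add: algebra_simps)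
  then show "cong_at P r A C" using X(1) Y(1) by (auto elim!: cong_atI intro: local_at_add)
qed

lemma cong_at_mult_left: "cong_at P r A B \<Longrightarrow> local_at P X \<Longrightarrow> cong_at P r (X * A) (X * B)"
proof -
  assume "cong_at P r A B" "local_at P X"
  then obtain C where C: "local_at P C" "A - B = to_fract P ^ r * C" by (meson cong_atE)
  then have "X * A - X * B = to_fract P ^ r * (X * C)" by (simp add: algebra_simps)
  then show ?thesis using C(1) \<open>local_at P X\<close> by (auto elim!: cong_atI intro: local_at_mult)
qed

lemma cong_at_mult_right: "cong_at P r A B \<Longrightarrow> local_at P X \<Longrightarrow> cong_at P r (A * X) (B * X)"
  using cong_at_mult_left[of P r A B X] by (simp add: mult.commute)

lemma cong_at_mult:
  "cong_at P r A B \<Longrightarrow> cong_at P r C D \<Longrightarrow> local_at P A \<Longrightarrow> local_at P D \<Longrightarrow>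
    cong_at P r (A * C) (B * D)"
  by (metis cong_at_mult_left cong_at_mult_right cong_at_trans)

lemma cong_at_sum:
  "(\<And>i. i \<in> S \<Longrightarrow> cong_at P r (f i) (g i)) \<Longrightarrow> cong_at P r (sum f S) (sum g S)"
  by (induction S rule: infinite_finite_induct) (simp_all add: cong_at_add)

lemma cong_at_mono:
  assumes "cong_at P r A B" "s \<le> r"
  shows "cong_at P s A B"
proof -
  obtain C where C: "local_at P C" "A - B = to_fract P ^ r * C" using assms(1) by (rule cong_atE)
  have "A - B = to_fract P ^ s * (to_fract P ^ (r - s) * C)"
    using C(2) assms(2) by (simp add: mult.assoc power_add[symmetric])
  then show ?thesis
    using C(1) by (auto elim!: cong_atI intro!: local_at_mult local_at_power)
qed

lemma cong_at_mult_zero: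
  assumes "cong_at P r A B" "cong_at P s Z 0"
  shows "cong_at P (r + s) (A * Z) (B * Z)"
proof -
  obtain X where X: "local_at P X" "A - B = to_fract P ^ r * X" using assms(1) by (rule cong_atE)
  obtain Y where Y: "local_at P Y" "Z - 0 = to_fract P ^ s * Y" using assms(2) by (rule cong_atE)
  have "A * Z - B * Z = to_fract P ^ (r + s) * (X * Y)"
    using X(2) Y(2) by (simp add: algebra_simps power_add)
  then show ?thesis using X(1) Y(1) by (auto elim!: cong_atI intro: local_at_mult)
qed

lemma local_at_if_cong_zero: "cong_at P r A 0 \<Longrightarrow> local_at P A"
  by (elim cong_atE) (auto intro!: local_at_mult local_at_power)

lemma cong_at_square_zero:
  assumes "cong_at P 1 e 0" "local_at P W"
  shows "cong_at P 2 (e * e * W) 0"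
  using cong_at_mult_right[OF cong_at_mult_zero[OF assms(1) assms(1)] assms(2)]
  by (simp add: numeral_2_eq_2)

lemma cong_at_power_linear:
  assumes "cong_at P 2 y (1 + e)" "cong_at P 1 e 0" "local_at P y"
  shows "cong_at P 2 (y ^ n) (1 + of_nat n * e)"
proof (induction n)
  case (Suc n)
  have e: "local_at P e" by (rule local_at_if_cong_zero[OF assms(2)])
  have "cong_at P 2 (y * y ^ n) (y * (1 + of_nat n * e))"
    by (rule cong_at_mult_left[OF Suc.IH assms(3)])
  also have "cong_at P 2 \<dots> ((1 + e) * (1 + of_nat n * e))"
    using e by (intro cong_at_mult_right[OF assms(1)] local_at_add local_at_mult) simp_all
  also have "(1 + e) * (1 + of_nat n * e) = (1 + of_nat (Suc n) * e) + e * e * of_nat n"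
    by (simp add: algebra_simps)
  also have "cong_at P 2 \<dots> ((1 + of_nat (Suc n) * e) + 0)"
    by (rule cong_at_add[OF cong_at_refl cong_at_square_zero[OF assms(2)]]) simp
  finally show ?case by simp
qed simp

lemma cong_at_divide:
  assumes "cong_at P (r + s) A B" "local_at P (1 / U)" "P \<noteq> 0"
  shows "cong_at P r (A / (to_fract P ^ s * U)) (B / (to_fract P ^ s * U))"
proof -
  obtain C where C: "local_at P C" "A - B = to_fract P ^ (r + s) * C" using assms(1) by (rule cong_atE)
  have "A / (to_fract P ^ s * U) - B / (to_fract P ^ s * U) = to_fract P ^ r * (C * (1 / U))"
    using C(2) assms(3) by (simp add: diff_divide_distrib[symmetric] power_add)
  then show ?thesis by (rule cong_atI[OF _ local_at_mult[OF C(1) assms(2)]])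
qed

text \<open>A congruence modulo \<open>P\<close> is a congruence in the sense of \<open>qcong_mod\<close>: passing to
  the reduced form of \<open>C\<close> only removes common factors from the denominator.\<close>
lemma qcong_mod_if_cong_at:
  assumes "cong_at P 1 A B"
  shows "qcong_mod A B P"
proof -
  obtain C where C: "local_at P C" "A - B = to_fract P * C"
    using assms by (auto elim: cong_atE)
  obtain p s where ps: "s \<noteq> 0" "coprime s P" "C = to_fract p / to_fract s"
    using C(1) unfolding local_at_def by blast
  define p' s' where "p' = fst (quot_of_fract C)" and "s' = snd (quot_of_fract C)"
  have "Fract p' s' = C" unfolding p'_def s'_def by simp
  moreover have "Fract p s = C" using ps(3) by (simp add: Fract_conv_to_fract)
  ultimately have "Fract p' s' = Fract p s" by simp
  then have "p' * s = p * s'" using ps(1) by (simp add: s'_def eq_fract)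
  then have "s' dvd p' * s" by (metis dvd_triv_right)
  then have "s' dvd s"
    using coprime_quot_of_fract[of C] unfolding p'_def s'_def
    by (simp add: coprime_commute coprime_dvd_mult_right_iff)
  then have "coprime s' P" using ps(2) by (rule coprime_divisors[OF _ dvd_refl])
  then show ?thesis unfolding qcong_mod_def s'_def using C(2) by blast
qed

text \<open>Linearisation of a product: if \<open>T \<equiv> 0\<close> modulo \<open>P\<close>, then
  \<open>\<Prod>(T x_i - 1) \<equiv> (-1)^|I| (1 - T \<Sum> x_i)\<close> modulo \<open>P^2\<close>, as all terms of degree \<open>\<ge> 2\<close> in \<open>T\<close> vanish.\<close>
lemma cong_at_prod_linear:
  assumes T: "cong_at P 1 T 0" and x: "\<And>i. i \<in> I \<Longrightarrow> local_at P (x i)"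
  shows "cong_at P 2 (\<Prod>i\<in>I. T * x i - 1) ((-1) ^ card I * (1 - T * (\<Sum>i\<in>I. x i)))"
  using x
proof (induction I rule: infinite_finite_induct)
  case (insert j I)
  define c where "c = ((-1) :: rfun) ^ card I"
  define S where "S = (\<Sum>i\<in>I. x i)"
  have loc: "local_at P T" "local_at P (x j)" "local_at P S" "local_at P c"
    using local_at_if_cong_zero[OF T] insert.prems unfolding S_def c_def
    by (auto intro!: local_at_sum local_at_power local_at_uminus)
  have "cong_at P 2 ((T * x j - 1) * (\<Prod>i\<in>I. T * x i - 1)) ((T * x j - 1) * (c * (1 - T * S)))"
    using insert loc unfolding c_def S_def by (intro cong_at_mult_left local_at_diff local_at_mult) auto
  also have "(T * x j - 1) * (c * (1 - T * S)) = - c * (1 - T * (x j + S)) + T * T * (- c * x j * S)"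
    by (simp add: algebra_simps)
  also have "cong_at P 2 \<dots> (- c * (1 - T * (x j + S)) + 0)"
    using loc by (intro cong_at_add cong_at_refl cong_at_square_zero[OF T]
        local_at_mult local_at_uminus)
  finally show ?case using insert.hyps unfolding c_def S_def by simp
qed simp_all

lemma cong_at_multiple:
  assumes "cong_at P r T 0" "local_at P X" "A - B = T * X"
  shows "cong_at P r A B"
proof -
  obtain C where C: "local_at P C" "T - 0 = to_fract P ^ r * C" using assms(1) by (rule cong_atE)
  have "A - B = to_fract P ^ r * (C * X)" using assms(3) C(2) by simp
  then show ?thesis by (rule cong_atI[OF _ local_at_mult[OF C(1) assms(2)]])
qed

lemma cong_at_inverse_linear:
  assumes "cong_at P 1 e 0" "local_at P (1 / (1 + e))" "1 + e \<noteq> 0"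
  shows "cong_at P 2 (1 / (1 + e)) (1 - e)"
proof -
  have "1 / (1 + e) = (1 - e) + e * e * (1 / (1 + e))"
    using assms(3) by (simp add: field_simps)
  also have "cong_at P 2 \<dots> ((1 - e) + 0)"
    by (rule cong_at_add[OF cong_at_refl cong_at_square_zero[OF assms(1,2)]])
  finally show ?thesis by simp
qed

section \<open>q-integers as rational functions\<close>

lemma to_fract_power: "to_fract (x ^ n) = to_fract x ^ n"
  by (induction n) simp_all

lemma qvar_to_fract: "qvar = to_fract qX"
  by (simp add: qvar_def qX_def)

lemma qint_to_fract: "qint n = to_fract (qint_poly n)"
  by (simp add: qint_def qint_poly_def qvar_to_fract to_fract_power)

lemma qvar_ne0: "qvar \<noteq> 0"
  by (simp add: qvar_def)

lemma qvar_ne1: "qvar \<noteq> 1"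
proof
  assume "qvar = 1"
  then have "to_fract qX = to_fract 1" by (simp add: qvar_def qX_def)
  then have "qX = 1" by (simp only: to_fract_eq_iff)
  then show False using qX_sub_one_ne0 by simp
qed

lemma qvar_powi_add: "qvar powi x * qvar powi y = qvar powi (x + y)"
  using power_int_add[of qvar x y] qvar_ne0 by simp

lemma qint_geom: "(1 - qvar) * qint n = 1 - qvar ^ n"
proof -
  have "to_fract ((qX - 1) * qint_poly n) = to_fract (qX ^ n - 1)" by (simp only: qint_poly_geom)
  then show ?thesis by (simp add: qint_to_fract qvar_to_fract to_fract_power algebra_simps)
qed

lemma qint_ne0: "0 < n \<Longrightarrow> qint n \<noteq> 0"
  by (simp add: qint_to_fract qint_poly_ne0)

lemma local_at_qvar [simp]: "local_at P qvar"
  by (simp add: qvar_def)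

lemma local_at_qint [simp]: "local_at P (qint n)"
  by (simp add: qint_to_fract)

lemma qint_reflect: "i \<le> n \<Longrightarrow> qint (n - i) = qvar powi (- int i) * (qint n - qint i)"
proof -
  assume "i \<le> n"
  then have "(1 - qvar) * (qvar ^ i * qint (n - i)) = (1 - qvar) * (qint n - qint i)"
    unfolding mult.left_commute[of _ "qvar ^ i"] qint_geom right_diff_distrib
    by (simp add: algebra_simps power_add[symmetric])
  then have "qvar ^ i * qint (n - i) = qint n - qint i" using qvar_ne1 by simp
  then show ?thesis using qvar_ne0 by (simp add: power_int_minus field_simps)
qed

lemma qint_double: "qint (2 * n) = qint n * (1 + qvar ^ n)"
proof -
  have "(1 - qvar) * qint (2 * n) = (1 - qvar) * (qint n * (1 + qvar ^ n))"
    unfolding mult.assoc[symmetric] qint_geom by (simp add: algebra_simps power_add[symmetric] mult_2 mult_2_right)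
  then show ?thesis using qvar_ne1 by simp
qed

text \<open>\<open>qtri k = q^(-k(k-1)/2)\<close>, the power of \<open>q\<close> produced by reflecting the factors of a
  q-binomial coefficient.\<close>
definition qtri :: "nat \<Rightarrow> rfun" where
  "qtri k = qvar powi (- int (k * (k - 1) div 2))"

lemma prod_qvar_powi_qtri: "(\<Prod>i<k. qvar powi (- int i)) = qtri k"
proof (induction k)
  case (Suc k)
  have "Suc k * k = k * (k - 1) + 2 * k" by (cases k) simp_all
  then have "Suc k * k div 2 = k * (k - 1) div 2 + k" by simp
  then show ?case using Suc by (simp add: qtri_def qvar_powi_add)
qed (simp add: qtri_def)

text \<open>Writing \<open>[n - i]_q = q^(-i) ([n]_q - [i]_q)\<close> in the numerator of the q-binomial gives
  \<open>[n choose k]_q = [n]_q q^(-k(k-1)/2) \<Prod>_{0<i<k} ([n]_q/[i]_q - 1) / [k]_q\<close>.\<close>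
lemma qbinom_eq:
  assumes "1 \<le> k" "k \<le> n"
  shows "qbinom n k = qint n * qtri k * (\<Prod>i\<in>{1..<k}. qint n * (1 / qint i) - 1) / qint k"
proof -
  define G where "G = (\<Prod>i\<in>{1..<k}. qint n * (1 / qint i) - 1)"
  define D where "D = (\<Prod>i\<in>{1..<k}. qint i)"
  have "(\<Prod>i<k. qint (n - i)) = qtri k * (\<Prod>i<k. qint n - qint i)"
    using assms(2) by (simp add: qint_reflect prod.distrib prod_qvar_powi_qtri)
  also have "(\<Prod>i<k. qint n - qint i) = qint n * (\<Prod>i\<in>{1..<k}. qint n - qint i)"
    using assms(1) by (simp add: lessThan_atLeast0 prod.atLeast_Suc_lessThan qint_def)
  also have "(\<Prod>i\<in>{1..<k}. qint n - qint i) = (\<Prod>i\<in>{1..<k}. (qint n * (1 / qint i) - 1) * qint i)"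
    by (intro prod.cong refl) (simp add: qint_ne0 field_simps)
  also have "\<dots> = G * D" unfolding G_def D_def by (rule prod.distrib)
  finally have num: "(\<Prod>i<k. qint (n - i)) = qtri k * (qint n * (G * D))" .
  have den: "(\<Prod>i\<in>{1..k}. qint i) = D * qint k"
    using assms(1) unfolding D_def by (metis atLeastLessThanSuc_atLeastAtMost prod.atLeastLessThan_Suc)
  have "D \<noteq> 0" unfolding D_def by (simp add: qint_ne0)
  have "qbinom n k = (\<Prod>i<k. qint (n - i)) / (\<Prod>i\<in>{1..k}. qint i)"
    using assms by (simp add: qbinom_def)
  also have "\<dots> = qint n * qtri k * G / qint k"
    unfolding num den using \<open>D \<noteq> 0\<close> by (simp add: field_simps)
  finally show ?thesis unfolding G_def .
qed

lemma rconst_of_int: "rconst (of_int z) = of_int z"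
proof -
  have "[:of_int z:] = (of_int z :: rat poly)" by (simp add: of_int_poly)
  then show ?thesis by (simp add: rconst_def to_fract_of_int)
qed

definition qharmonic :: "nat \<Rightarrow> rfun" where
  "qharmonic k = (\<Sum>i\<in>{1..<k}. 1 / qint i)"

lemma Legendre_3:
  "Legendre (int k) 3 = (if k mod 3 = 0 then 0 else if k mod 3 = 1 then 1 else -1)"
proof -
  have sq: "y ^ 2 mod 3 \<noteq> 2" for y :: int
  proof -
    have "y mod 3 = 0 \<or> y mod 3 = 1 \<or> y mod 3 = 2" by presburger
    moreover have "y ^ 2 mod 3 = (y mod 3) ^ 2 mod 3" by (simp add: power_mod)
    ultimately show ?thesis by auto
  qed
  have "[int k = 0] (mod 3) \<longleftrightarrow> k mod 3 = 0" unfolding cong_def by presburger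
  moreover have "k mod 3 = 1 \<Longrightarrow> QuadRes 3 (int k)"
    unfolding QuadRes_def cong_def using zmod_int[of k 3] by (intro exI[of _ 1]) simp
  moreover have "\<not> QuadRes 3 (int k)" if "k mod 3 = 2"
  proof
    assume "QuadRes 3 (int k)"
    then obtain y where "y ^ 2 mod 3 = int k mod 3" unfolding QuadRes_def cong_def by blast
    then show False using sq that zmod_int[of k 3] by simp
  qed
  moreover have "k mod 3 = 0 \<or> k mod 3 = 1 \<or> k mod 3 = 2" by presburger
  ultimately show ?thesis unfolding Legendre_def by auto
qed

lemma mod3_reflect:
  assumes "(N::nat) mod 3 = 0" "k < N" "k mod 3 \<noteq> 0"
  shows "(N - k) mod 3 = 3 - k mod 3"
proof -
  define r where "r = 3 - k mod 3"
  obtain u where u: "N = 3 * u" using assms(1) by auto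
  have k: "k = 3 * (k div 3) + k mod 3" and "k mod 3 < 3" by simp_all
  then have "N - k = 3 * (u - k div 3 - 1) + r" "r < 3"
    using u assms(2,3) unfolding r_def by linarith+
  then show ?thesis unfolding r_def[symmetric] by simp
qed

lemma sum_pair_mod3:
  fixes f :: "nat \<Rightarrow> 'b::comm_monoid_add"
  assumes N: "N mod 3 = 0" and f: "\<And>k. k mod 3 = 0 \<Longrightarrow> f k = 0"
  shows "sum f {1..N - 1} = (\<Sum>k\<in>{k. 1 \<le> k \<and> k \<le> N - 1 \<and> k mod 3 = 1}. f k + f (N - k))"
proof -
  define K where "K r = {k. 1 \<le> k \<and> k \<le> N - 1 \<and> k mod 3 = r}" for r
  have "k mod 3 = 0 \<or> k mod 3 = 1 \<or> k mod 3 = 2" for k :: nat by presburger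
  then have split: "{1..N - 1} = K 0 \<union> (K 1 \<union> K 2)" unfolding K_def by auto
  have "sum f {1..N - 1} = sum f (K 0) + sum f (K 1 \<union> K 2)"
    unfolding split by (rule sum.union_disjoint) (auto simp: K_def)
  also have "sum f (K 1 \<union> K 2) = sum f (K 1) + sum f (K 2)"
    by (rule sum.union_disjoint) (auto simp: K_def)
  also have "sum f (K 0) = 0" using f by (simp add: K_def)
  also have "sum f (K 2) = (\<Sum>k\<in>K 1. f (N - k))"
  proof (rule sum.reindex_bij_witness[of _ "\<lambda>k. N - k" "\<lambda>k. N - k"])
    show "k \<in> K 1 \<Longrightarrow> N - k \<in> K 2" "k \<in> K 2 \<Longrightarrow> N - k \<in> K 1" for k
      using mod3_reflect[OF N, of k] unfolding K_def by auto
  qed (auto simp: K_def)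
  finally show ?thesis unfolding K_def by (simp add: sum.distrib)
qed

lemma reflection_dvd:
  fixes \<psi> :: "int \<Rightarrow> int"
  assumes "\<And>k. [\<psi> k = \<psi> (- k)] (mod m)" "\<And>k. [\<psi> (k + m) = \<psi> k] (mod m)"
  shows "m dvd \<psi> (m - k) - \<psi> k"
proof -
  have "[\<psi> (m - k) = \<psi> (k - m)] (mod m)" using assms(1)[of "m - k"] by simp
  also have "[\<psi> (k - m) = \<psi> k] (mod m)" using assms(2)[of "k - m"] by (simp add: cong_sym)
  finally show ?thesis by (simp add: cong_iff_dvd_diff)
qed

lemma tri_reflect:
  assumes "odd N" "1 \<le> k" "k < N"
  shows "int ((N - k) * (N - k - 1) div 2) = int N * ((int N - 1) div 2 - int k) + int (k * (k - 1) div 2) + int k"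
proof -
  have even: "even (n * (n - 1))" for n :: nat by (cases "even n") auto
  have half: "2 * int (n * (n - 1) div 2) = int n * (int n - 1)" if "1 \<le> n" for n :: nat
  proof -
    have "2 * int (n * (n - 1) div 2) = int (n * (n - 1))"
      using even[of n] by (metis dvd_mult_div_cancel of_nat_mult of_nat_numeral)
    then show ?thesis using that by simp
  qed
  define h where "h = (int N - 1) div 2"
  have h: "2 * h = int N - 1" unfolding h_def using assms(1) by simp
  have "2 * int ((N - k) * (N - k - 1) div 2) = (int N - int k) * (int N - int k - 1)"
    using half[of "N - k"] assms by simp
  also have "\<dots> = int N * (2 * h) - 2 * int N * int k + int k * (int k - 1) + 2 * int k"
    unfolding h by (simp add: algebra_simps)
  also have "\<dots> = 2 * (int N * (h - int k) + int (k * (k - 1) div 2) + int k)"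
    unfolding half[OF assms(2), symmetric] by (simp add: algebra_simps)
  finally show ?thesis unfolding h_def by simp
qed

lemma minus_one_power_reflect:
  assumes "odd N" "1 \<le> k" "k < N"
  shows "(-1 :: 'a::ring_1) ^ (N - k - 1) = - ((-1) ^ (k - 1))"
proof -
  have "(N - k - 1) + (k - 1) = N - 2" using assms(2,3) by simp
  moreover have "odd (N - 2)" using assms by simp
  ultimately have "even (N - k - 1) \<longleftrightarrow> odd (k - 1)" by (metis even_add)
  then show ?thesis by (simp add: minus_one_power_iff)
qed

text \<open>With \<open>(1 - q) k = 1 - r\<close> (i.e. \<open>k = [j]_q\<close>, \<open>r = q^j\<close>) and \<open>t = [3^a]_q\<close>: the sum of the two
  leading terms of a pair, split into its parts linear and quadratic in \<open>t\<close>.\<close>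
lemma pair_identity:
  fixes t k q e r :: "'a::field"
  assumes "k \<noteq> 0" "t - k \<noteq> 0" "(1 - q) * k = 1 - r"
  shows "1 / k + (1 + e * ((q - 1) * t)) * (1 / (t - k))
    = - t * ((1 - e * (1 - r)) / k ^ 2) + t * t * ((1 - e * (1 - r)) * (1 / k) * (1 / k) * (1 / (t - k)))"
proof -
  have r: "r = 1 - (1 - q) * k" using assms(3) by simp
  show ?thesis unfolding r using assms(1,2) by (simp add: field_simps power2_eq_square)
qed

text \<open>The harmonic parts of a pair, after reduction modulo \<open>t\<close>.\<close>
lemma harmonic_pair_identity:
  fixes C k q H M r :: "'a::field"
  assumes "k \<noteq> 0" "(1 - q) * k = 1 - r"
  shows "C / k * H + C * (- 1 / k * (M * (1 - q) + (H + 1 / k))) = - (C * (1 + M * (1 - r)) / k ^ 2)"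
proof -
  have r: "r = 1 - (1 - q) * k" using assms(2) by simp
  show ?thesis unfolding r using assms(1) by (simp add: field_simps power2_eq_square)
qed

text \<open>Regrouping two summands \<open>T w - T^2 w H\<close>, and expanding with \<open>T = t (2 + d t)\<close>.\<close>
lemma regroup_pair:
  fixes T a b h g :: "'a::comm_ring"
  shows "(T * a - T * T * (a * h)) + (T * b - T * T * (b * g)) = (a + b) * T - (a * h + b * g) * (T * T)"
  by (simp add: algebra_simps)

lemma expand_pair:
  fixes t d X Y :: "'a::comm_ring_1"
  shows "(- t * X) * (t * (2 + d * t)) - (- Y) * ((t * (2 + d * t)) * (t * (2 + d * t)))
    = 2 * t ^ 2 * (2 * Y - X) + t * t * t * (d * (- X + (4 + d * t) * Y))"
  by (simp add: algebra_simps power2_eq_square)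

text \<open>\<open>2 Y_k - X_k = R_k\<close>.\<close>
lemma combine_pair:
  fixes C m x u d :: "'a::field"
  shows "2 * (C * (1 + m * u) / d) - C * (1 - (x - m) * u) / d = C * (1 + (x + m) * u) / d"
  by (simp add: diff_divide_distrib[symmetric] algebra_simps)

lemma inverse_difference_identity:
  fixes t k :: "'a::field"
  assumes "k \<noteq> 0" "t - k \<noteq> 0"
  shows "1 / (t - k) - - 1 / k = t * (1 / (t - k) * (1 / k))"
  using assms by (simp add: field_simps)

section \<open>Congruences modulo powers of \<open>Phi3 a\<close>\<close>

context
  fixes a :: nat
  assumes a_pos: "0 < a"
begin

lemma local_qvar_powi: "local_at (Phi3 a) (qvar powi z)"
proof (cases "0 \<le> z")
  case True
  then show ?thesis by (simp add: power_int_def local_at_power)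
next
  case False
  then have "qvar powi z = 1 / to_fract (qX ^ nat (- z))"
    by (simp add: power_int_def qvar_to_fract to_fract_power divide_inverse power_inverse)
  moreover have "coprime (qX ^ nat (- z)) (Phi3 a)" "qX ^ nat (- z) \<noteq> 0"
    using coprime_X_Phi3[OF a_pos] by (simp_all add: qX_def)
  ultimately show ?thesis by (simp add: local_at_inverse)
qed

lemma local_inv_qint: "0 < i \<Longrightarrow> i < 3 ^ a \<Longrightarrow> local_at (Phi3 a) (1 / qint i)"
  unfolding qint_to_fract by (intro local_at_inverse qint_poly_ne0 coprime_qint_poly_Phi3 a_pos)

lemma qint_3a_factor: "qint (3 ^ a) = to_fract (Phi3 a) * qint (3 ^ (a - 1))"
  by (simp add: qint_to_fract qint_poly_Phi3[OF a_pos])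

lemma cong_qint_3a: "cong_at (Phi3 a) 1 (qint (3 ^ a)) 0"
  by (rule cong_atI[where C = "qint (3 ^ (a - 1))"]) (simp_all add: qint_3a_factor)

lemma cong_qint_2_3a: "cong_at (Phi3 a) 1 (qint (2 * 3 ^ a)) 0"
  using cong_at_mult_right[OF cong_qint_3a, of "1 + qvar ^ 3 ^ a"]
  by (simp add: qint_double local_at_add local_at_power)

text \<open>With \<open>q^(3^a) = 1 + \<delta>\<close>, \<open>\<delta> = (q - 1)[3^a]_q \<equiv> 0\<close>, the binomial expansion gives
  \<open>q^(3^a e) \<equiv> 1 + e \<delta>\<close> modulo \<open>Phi3 a ^ 2\<close> for every integer \<open>e\<close>.\<close>
lemma cong_qvar_powi_3a:
  "cong_at (Phi3 a) 2 (qvar powi (3 ^ a * e)) (1 + of_int e * ((qvar - 1) * qint (3 ^ a)))"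
proof -
  define \<delta> where "\<delta> = (qvar - 1) * qint (3 ^ a)"
  have y: "qvar ^ 3 ^ a = 1 + \<delta>" using qint_geom[of "3 ^ a"] by (simp add: \<delta>_def algebra_simps)
  have \<delta>: "cong_at (Phi3 a) 1 \<delta> 0"
    using cong_at_mult_left[OF cong_qint_3a, of "qvar - 1"] by (simp add: \<delta>_def local_at_diff)
  show ?thesis
  proof (cases "0 \<le> e")
    case True
    have "qvar powi (3 ^ a * e) = (qvar ^ 3 ^ a) ^ nat e"
      using True by (simp add: power_int_def nat_mult_distrib nat_power_eq power_mult)
    also have "cong_at (Phi3 a) 2 \<dots> (1 + of_nat (nat e) * \<delta>)"
      unfolding y
      by (rule cong_at_power_linear[OF cong_at_refl \<delta> local_at_add[OF local_at_1 local_at_if_cong_zero[OF \<delta>]]])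
    finally show ?thesis using True by (simp add: \<delta>_def)
  next
    case False
    have ne: "1 + \<delta> \<noteq> 0" using qvar_ne0 y[symmetric] by simp
    have inv: "local_at (Phi3 a) (1 / (1 + \<delta>))"
    proof -
      have "qvar powi (- int (3 ^ a)) = 1 / (1 + \<delta>)"
        by (subst power_int_minus, subst power_int_of_nat) (simp add: y divide_inverse)
      then show ?thesis using local_qvar_powi by metis
    qed
    have "3 ^ a * e = - int (3 ^ a * nat (- e))" using False by simp
    then have "qvar powi (3 ^ a * e) = inverse ((qvar ^ 3 ^ a) ^ nat (- e))"
      by (simp only: power_int_minus power_int_of_nat power_mult)
    also have "\<dots> = (1 / (1 + \<delta>)) ^ nat (- e)"
      by (simp add: y power_inverse divide_inverse)
    also have "cong_at (Phi3 a) 2 \<dots> (1 + of_nat (nat (- e)) * (- \<delta>))"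
    proof (rule cong_at_power_linear[OF _ _ inv])
      show "cong_at (Phi3 a) 2 (1 / (1 + \<delta>)) (1 + - \<delta>)"
        using cong_at_inverse_linear[OF \<delta> inv ne] by simp
      show "cong_at (Phi3 a) 1 (- \<delta>) 0"
        using cong_at_diff[OF cong_at_refl[of _ _ 0] \<delta>] by simp
    qed
    finally show ?thesis using False by (simp add: \<delta>_def)
  qed
qed

lemma cong_inv_qint_reflect:
  assumes "0 < j" "j < 3 ^ a"
  shows "cong_at (Phi3 a) 1 (1 / qint (3 ^ a - j)) ((1 - qvar) - 1 / qint j)"
proof (rule cong_at_multiple[OF cong_qint_3a])
  define A where "A = qint (3 ^ a - j)"
  have A: "A \<noteq> 0" "local_at (Phi3 a) (1 / A)" and j: "qint j \<noteq> 0"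
    using assms local_inv_qint[of "3 ^ a - j"] qint_ne0 unfolding A_def by simp_all
  have t: "qint (3 ^ a) = A * qvar ^ j + qint j"
    using qint_reflect[of j "3 ^ a"] assms(2) qvar_ne0 unfolding A_def
    by (simp add: power_int_minus field_simps)
  have q: "1 - qvar = (1 - qvar ^ j) / qint j"
    using qint_geom[of j] j by (simp add: field_simps)
  show "local_at (Phi3 a) (1 / A * (1 / qint j))"
    using A(2) local_inv_qint assms by (intro local_at_mult) simp_all
  show "1 / qint (3 ^ a - j) - (1 - qvar - 1 / qint j) = qint (3 ^ a) * (1 / A * (1 / qint j))"
    unfolding A_def[symmetric] t q using A(1) j by (simp add: field_simps)
qed

text \<open>Summing the reflection over \<open>0 < i < 3^a\<close>: \<open>2 H_(3^a) \<equiv> (3^a - 1)(1 - q)\<close> modulo \<open>Phi3 a\<close>.\<close>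
lemma cong_qharmonic_3a:
  "cong_at (Phi3 a) 1 (qharmonic (3 ^ a)) (of_nat (3 ^ a - 1) * (1 - qvar) / 2)"
proof -
  have "qharmonic (3 ^ a) = (\<Sum>i\<in>{1..<3 ^ a}. 1 / qint (3 ^ a - i))"
    unfolding qharmonic_def by (rule sum.reindex_bij_witness[of _ "\<lambda>i. 3 ^ a - i" "\<lambda>i. 3 ^ a - i"]) auto
  also have "cong_at (Phi3 a) 1 \<dots> (\<Sum>i\<in>{1..<3 ^ a}. (1 - qvar) - 1 / qint i)"
    by (intro cong_at_sum cong_inv_qint_reflect) auto
  also have "\<dots> = of_nat (3 ^ a - 1) * (1 - qvar) - qharmonic (3 ^ a)"
    unfolding qharmonic_def by (simp add: sum_subtractf)
  finally have "cong_at (Phi3 a) 1 (1 / 2 * (qharmonic (3 ^ a) + qharmonic (3 ^ a)))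
      (1 / 2 * (of_nat (3 ^ a - 1) * (1 - qvar) - qharmonic (3 ^ a) + qharmonic (3 ^ a)))"
    by (intro cong_at_mult_left cong_at_add cong_at_refl local_at_half)
  then show ?thesis by simp
qed

lemma cong_qharmonic_reflect:
  assumes "1 \<le> k" "k < 3 ^ a"
  shows "cong_at (Phi3 a) 1 (qharmonic (3 ^ a - k))
    (of_int ((3 ^ a - 1) div 2 - int k) * (1 - qvar) + (qharmonic k + 1 / qint k))"
proof -
  have "qharmonic (3 ^ a) = qharmonic (3 ^ a - k) + (\<Sum>i\<in>{3 ^ a - k..<3 ^ a}. 1 / qint i)"
    unfolding qharmonic_def using assms by (subst sum.atLeastLessThan_concat[symmetric]) auto
  moreover have "(\<Sum>i\<in>{3 ^ a - k..<3 ^ a}. 1 / qint i) = (\<Sum>j\<in>{1..k}. 1 / qint (3 ^ a - j))"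
    by (rule sum.reindex_bij_witness[of _ "\<lambda>i. 3 ^ a - i" "\<lambda>i. 3 ^ a - i"]) (use assms in auto)
  ultimately have "qharmonic (3 ^ a - k) = qharmonic (3 ^ a) - (\<Sum>j\<in>{1..k}. 1 / qint (3 ^ a - j))"
    by simp
  also have "cong_at (Phi3 a) 1 \<dots>
      (of_nat (3 ^ a - 1) * (1 - qvar) / 2 - (\<Sum>j\<in>{1..k}. (1 - qvar) - 1 / qint j))"
    using assms by (intro cong_at_diff cong_qharmonic_3a cong_at_sum cong_inv_qint_reflect) auto
  also have "(\<Sum>j\<in>{1..k}. (1 - qvar) - 1 / qint j) = of_nat k * (1 - qvar) - (qharmonic k + 1 / qint k)"
    unfolding qharmonic_def using assms
    by (simp add: sum_subtractf atLeastLessThanSuc_atLeastAtMost[symmetric] sum.atLeastLessThan_Suc)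
  also have "of_nat (3 ^ a - 1) * (1 - qvar) / 2 - (of_nat k * (1 - qvar) - (qharmonic k + 1 / qint k))
      = of_int ((3 ^ a - 1) div 2 - int k) * (1 - qvar) + (qharmonic k + 1 / qint k)"
  proof -
    define h where "h = ((3::int) ^ a - 1) div 2"
    have "int (3 ^ a - 1) = 2 * h" unfolding h_def by (simp add: of_nat_diff)
    then have "(of_nat (3 ^ a - 1) :: rfun) = 2 * of_int h"
      by (metis of_int_of_nat_eq of_int_mult of_int_numeral)
    then show ?thesis unfolding h_def[symmetric] by (simp add: field_simps)
  qed
  finally show ?thesis .
qed

lemma cong_qint_3a_cube: "local_at (Phi3 a) Q \<Longrightarrow>
    cong_at (Phi3 a) 3 (qint (3 ^ a) * qint (3 ^ a) * qint (3 ^ a) * Q) 0"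
  using cong_at_mult_right[OF cong_at_mult_zero[OF cong_at_mult_zero[OF cong_qint_3a
      cong_qint_3a] cong_qint_3a]]
  by (simp add: numeral_3_eq_3)

lemma cong_summand:
  assumes k: "1 \<le> k" "k < 3 ^ a" and c: "local_at (Phi3 a) c"
  defines "T \<equiv> qint (2 * 3 ^ a)" and "w \<equiv> c * (-1) ^ (k - 1) * qtri k / qint k"
  shows "cong_at (Phi3 a) 3 (c * qbinom (2 * 3 ^ a) k) (T * w - T * T * (w * qharmonic k))"
proof -
  define G where "G = (\<Prod>i\<in>{1..<k}. T * (1 / qint i) - 1)"
  define V where "V = c * qtri k / qint k"
  have T: "cong_at (Phi3 a) 1 T 0" unfolding T_def by (rule cong_qint_2_3a)
  have "local_at (Phi3 a) (c * qtri k * (1 / qint k))"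
    unfolding qtri_def using k c by (intro local_at_mult local_qvar_powi local_inv_qint) simp_all
  then have "local_at (Phi3 a) V" unfolding V_def by simp
  then have TV: "cong_at (Phi3 a) 1 (T * V) 0"
    using cong_at_mult_right[OF T] by simp
  have G: "cong_at (Phi3 a) 2 G ((-1) ^ (k - 1) * (1 - T * qharmonic k))"
  proof -
    have "local_at (Phi3 a) (1 / qint i)" if "i \<in> {1..<k}" for i
      using that k by (intro local_inv_qint) auto
    then have "cong_at (Phi3 a) 2 (\<Prod>i\<in>{1..<k}. T * (1 / qint i) - 1)
        ((-1) ^ card {1..<k} * (1 - T * (\<Sum>i\<in>{1..<k}. 1 / qint i)))"
      by (rule cong_at_prod_linear[OF T])
    then show ?thesis unfolding G_def qharmonic_def by simp
  qed
  have "qbinom (2 * 3 ^ a) k = T * qtri k * G / qint k"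
    unfolding T_def G_def using k by (intro qbinom_eq) simp_all
  then have "c * qbinom (2 * 3 ^ a) k = G * (T * V)"
    unfolding V_def by simp
  also have "cong_at (Phi3 a) (2 + 1) \<dots> ((-1) ^ (k - 1) * (1 - T * qharmonic k) * (T * V))"
    by (rule cong_at_mult_zero[OF G TV])
  also have "(-1) ^ (k - 1) * (1 - T * qharmonic k) * (T * V) = T * w - T * T * (w * qharmonic k)"
    unfolding w_def V_def by (simp add: algebra_simps)
  finally show ?thesis by simp
qed

text \<open>Dividing by \<open>2 [3^a]_q^2 = 2 Phi3(a)^2 [3^(a-1)]_q^2\<close> turns a congruence modulo
  \<open>Phi3 a ^ 3\<close> into one modulo \<open>Phi3 a\<close>.\<close>
lemma cancel_two_qint_3a_squared:
  assumes "cong_at (Phi3 a) 3 A (2 * qint (3 ^ a) ^ 2 * B)"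
  shows "cong_at (Phi3 a) 1 (1 / (2 * qint (3 ^ a) ^ 2) * A) B"
proof -
  define U where "U = 2 * qint (3 ^ (a - 1)) ^ 2"
  have sq: "2 * qint (3 ^ a) ^ 2 = to_fract (Phi3 a) ^ 2 * U"
    unfolding U_def qint_3a_factor by (simp add: power_mult_distrib)
  have "local_at (Phi3 a) (1 / 2 * (1 / qint (3 ^ (a - 1))) ^ 2)"
    using a_pos by (intro local_at_mult local_at_power local_at_half local_inv_qint) simp_all
  then have U: "local_at (Phi3 a) (1 / U)" unfolding U_def by (simp add: power_divide)
  have "cong_at (Phi3 a) 1 (A / (to_fract (Phi3 a) ^ 2 * U))
      (2 * qint (3 ^ a) ^ 2 * B / (to_fract (Phi3 a) ^ 2 * U))"
    using assms by (intro cong_at_divide[OF _ U Phi3_ne0[OF a_pos]]) (simp add: numeral_3_eq_3)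
  moreover have "qint (3 ^ a) \<noteq> 0" by (simp add: qint_ne0)
  ultimately show ?thesis unfolding sq[symmetric] by simp
qed

section \<open>Pairing the summands \<open>k\<close> and \<open>3^a - k\<close>\<close>

text \<open>Here \<open>\<psi>\<close> only needs \<open>\<psi>(3^a - k) \<equiv> \<psi>(k) (mod 3^a)\<close>, which follows from the hypotheses of
  the theorem by \<open>reflection_dvd\<close>.\<close>
context
  fixes \<psi> :: "int \<Rightarrow> int"
  assumes psi_reflect: "\<And>k. 3 ^ a dvd \<psi> (3 ^ a - int k) - \<psi> (int k)"
begin

text \<open>The coefficient of \<open>[2 \<cdot> 3^a choose k]_q\<close> in the sum, the resulting leading term
  \<open>w_k\<close> of \<open>cong_summand\<close>, and for \<open>k \<equiv> 1 (mod 3)\<close> the common factor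
  \<open>(-1)^(k-1) q^(\<psi>(k) - k(k-1)/2)\<close> of the pair \<open>k, 3^a - k\<close>.\<close>
definition coef_sum :: "nat \<Rightarrow> rfun" where
  "coef_sum k = qvar powi \<psi> (int k) * of_int (Legendre (int k) 3)"

definition lead_term :: "nat \<Rightarrow> rfun" where
  "lead_term k = coef_sum k * (-1) ^ (k - 1) * qtri k / qint k"

definition pair_coef :: "nat \<Rightarrow> rfun" where
  "pair_coef k = (-1) ^ (k - 1) * qtri k * qvar powi \<psi> (int k)"

definition psi_quot :: "nat \<Rightarrow> int" where
  "psi_quot k = (\<psi> (3 ^ a - int k) - \<psi> (int k)) div 3 ^ a"

definition mid_shift :: "nat \<Rightarrow> int" where
  "mid_shift k = (3 ^ a - 1) div 2 - int k"

text \<open>The quantities \<open>X_k\<close>, \<open>Y_k\<close> of the two halves of the pairing and their combination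
  \<open>R_k = 2 Y_k - X_k\<close>, which is the \<open>k\<close>-th term of the right-hand side.\<close>
definition pair_X :: "nat \<Rightarrow> rfun" where
  "pair_X k = pair_coef k * (1 - of_int (psi_quot k - mid_shift k) * (1 - qvar ^ k)) / qint k ^ 2"

definition pair_Y :: "nat \<Rightarrow> rfun" where
  "pair_Y k = pair_coef k * (1 + of_int (mid_shift k) * (1 - qvar ^ k)) / qint k ^ 2"

definition pair_R :: "nat \<Rightarrow> rfun" where
  "pair_R k = pair_coef k * (1 + of_int (psi_quot k + mid_shift k) * (1 - qvar ^ k)) / qint k ^ 2"

lemma local_coef_sum: "local_at (Phi3 a) (coef_sum k)"
  unfolding coef_sum_def by (intro local_at_mult local_qvar_powi local_at_of_int)

lemma local_pair_coef: "local_at (Phi3 a) (pair_coef k)"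
  unfolding pair_coef_def qtri_def
  by (intro local_at_mult local_at_power local_at_uminus local_at_1 local_qvar_powi)

context
  fixes k :: nat
  assumes k: "1 \<le> k" "k < 3 ^ a" and k_mod: "k mod 3 = 1"
begin

text \<open>For \<open>k \<equiv> 1 (mod 3)\<close> the Legendre symbol is 1, so \<open>w_k = pair_coef k / [k]_q\<close>.\<close>
lemma lead_term_eq: "lead_term k = pair_coef k / qint k"
  using k_mod by (simp add: lead_term_def pair_coef_def coef_sum_def Legendre_3 mult_ac)

lemma qint_reflect_k: "qint (3 ^ a - k) = qvar powi (- int k) * (qint (3 ^ a) - qint k)"
  using k by (intro qint_reflect) simp

lemma qint_diff_ne0: "qint (3 ^ a) - qint k \<noteq> 0"
  using qint_reflect_k qint_ne0[of "3 ^ a - k"] k by auto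

lemma local_inv_qint_diff: "local_at (Phi3 a) (1 / (qint (3 ^ a) - qint k))"
proof -
  have eq: "1 / (qint (3 ^ a) - qint k) = qvar powi (- int k) * (1 / qint (3 ^ a - k))"
    using qint_reflect_k qvar_ne0 by (simp add: power_int_minus field_simps)
  have "local_at (Phi3 a) (qvar powi (- int k) * (1 / qint (3 ^ a - k)))"
    using k by (intro local_at_mult local_qvar_powi local_inv_qint) simp_all
  then show ?thesis unfolding eq .
qed

lemma lead_term_reflect:
  "lead_term (3 ^ a - k) =
    pair_coef k * qvar powi (3 ^ a * (psi_quot k - mid_shift k)) / (qint (3 ^ a) - qint k)"
proof -
  define N :: nat where "N = 3 ^ a"
  have N: "N mod 3 = 0" "odd N" "int N = 3 ^ a" using a_pos by (simp_all add: N_def)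
  have "(N - k) mod 3 = 2" using mod3_reflect[OF N(1)] k k_mod unfolding N_def by simp
  have sign: "(-1 :: rfun) ^ (N - k - 1) = - ((-1) ^ (k - 1))"
    using minus_one_power_reflect[OF N(2)] k unfolding N_def by simp
  have int_diff: "int (N - k) = 3 ^ a - int k" using k N(3) unfolding N_def by simp
  have legendre: "Legendre (3 ^ a - int k) 3 = -1"
    using Legendre_3[of "N - k"] \<open>(N - k) mod 3 = 2\<close> unfolding int_diff by simp
  have psi: "\<psi> (3 ^ a - int k) = \<psi> (int k) + 3 ^ a * psi_quot k"
    using psi_reflect[of k] unfolding psi_quot_def by simp
  have expo: "\<psi> (3 ^ a - int k) + - int ((N - k) * (N - k - 1) div 2) + int k
      = - int (k * (k - 1) div 2) + \<psi> (int k) + 3 ^ a * (psi_quot k - mid_shift k)"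
    unfolding psi tri_reflect[OF N(2) k(1) k(2)[folded N_def]] N(3) mid_shift_def
    by (simp add: algebra_simps)
  have "lead_term (N - k) = (-1) ^ (k - 1) * (qvar powi \<psi> (3 ^ a - int k)
      * qvar powi (- int ((N - k) * (N - k - 1) div 2)) * qvar powi (int k)) / (qint N - qint k)"
    unfolding lead_term_def coef_sum_def legendre sign qtri_def int_diff
      qint_reflect_k[folded N_def] using qvar_ne0
    by (simp add: power_int_minus field_simps)
  also have "qvar powi \<psi> (3 ^ a - int k) * qvar powi (- int ((N - k) * (N - k - 1) div 2))
      * qvar powi (int k) = qtri k * qvar powi \<psi> (int k) * qvar powi (3 ^ a * (psi_quot k - mid_shift k))"
    unfolding qvar_powi_add expo qtri_def ..
  finally show ?thesis unfolding N_def pair_coef_def by (simp add: mult.assoc)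
qed

lemma cong_lead_pair:
  "cong_at (Phi3 a) 2 (lead_term k + lead_term (3 ^ a - k)) (- qint (3 ^ a) * pair_X k)"
proof -
  define t where "t = qint (3 ^ a)"
  define D where "D = 1 / (t - qint k)"
  define e where "e = (of_int (psi_quot k - mid_shift k) :: rfun)"
  define Z where "Z = 1 - e * (1 - qvar ^ k)"
  define C where "C = pair_coef k"
  have qk: "qint k \<noteq> 0" using k by (simp add: qint_ne0)
  have tk: "t - qint k \<noteq> 0" unfolding t_def by (rule qint_diff_ne0)
  have locD: "local_at (Phi3 a) D" unfolding D_def t_def by (rule local_inv_qint_diff)
  have locC: "local_at (Phi3 a) C" unfolding C_def by (rule local_pair_coef)
  have locR: "local_at (Phi3 a) (Z * (1 / qint k) * (1 / qint k) * D)"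
    unfolding Z_def e_def using k locD
    by (intro local_at_mult local_at_diff local_at_1 local_at_of_int local_at_power local_at_qvar
        local_inv_qint) simp_all
  have "lead_term k + lead_term (3 ^ a - k)
      = C * (1 / qint k + qvar powi (3 ^ a * (psi_quot k - mid_shift k)) * D)"
    unfolding lead_term_eq lead_term_reflect C_def D_def t_def by (simp add: distrib_left)
  also have "cong_at (Phi3 a) 2 \<dots> (C * (1 / qint k + (1 + e * ((qvar - 1) * t)) * D))"
    unfolding e_def t_def using locD locC
    by (intro cong_at_mult_left cong_at_add cong_at_refl cong_at_mult_right cong_qvar_powi_3a)
  also have "\<dots> = C * (- t * (Z / qint k ^ 2) + t * t * (Z * (1 / qint k) * (1 / qint k) * D))"
    unfolding D_def Z_def pair_identity[OF qk tk qint_geom] ..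
  also have "cong_at (Phi3 a) 2 \<dots> (C * (- t * (Z / qint k ^ 2) + 0))"
    unfolding t_def using locC locR
    by (intro cong_at_mult_left cong_at_add cong_at_refl cong_at_square_zero cong_qint_3a)
  finally show ?thesis unfolding C_def Z_def e_def t_def pair_X_def by (simp add: mult_ac)
qed

text \<open>Modulo \<open>Phi3 a\<close>, the reflected factor \<open>q^(3^a e) / ([3^a]_q - [k]_q)\<close> reduces to
  \<open>-1/[k]_q\<close>, because \<open>q^(3^a) \<equiv> 1\<close> and \<open>[3^a]_q \<equiv> 0\<close>.\<close>
lemma cong_reflected_factor:
  "cong_at (Phi3 a) 1 (qvar powi (3 ^ a * e) * (1 / (qint (3 ^ a) - qint k))) (- 1 / qint k)"
proof -
  define D where "D = 1 / (qint (3 ^ a) - qint k)"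
  have qk: "qint k \<noteq> 0" using k by (simp add: qint_ne0)
  have W: "cong_at (Phi3 a) 1 (qvar powi (3 ^ a * e)) 1"
  proof -
    have "cong_at (Phi3 a) 1 (qvar powi (3 ^ a * e)) (1 + of_int e * ((qvar - 1) * qint (3 ^ a)))"
      by (rule cong_at_mono[OF cong_qvar_powi_3a]) simp
    also have "cong_at (Phi3 a) 1 \<dots> (1 + of_int e * ((qvar - 1) * 0))"
      by (intro cong_at_add cong_at_mult_left cong_qint_3a cong_at_refl local_at_of_int
          local_at_diff local_at_mult local_at_qvar local_at_1)
    finally show ?thesis by simp
  qed
  have D: "cong_at (Phi3 a) 1 D (- 1 / qint k)"
  proof (rule cong_at_multiple[OF cong_qint_3a])
    show "local_at (Phi3 a) (D * (1 / qint k))"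
      unfolding D_def using k by (intro local_at_mult local_inv_qint_diff local_inv_qint) simp_all
    show "D - - 1 / qint k = qint (3 ^ a) * (D * (1 / qint k))"
      unfolding D_def by (rule inverse_difference_identity[OF qk qint_diff_ne0])
  qed
  have "local_at (Phi3 a) (- 1 / qint k)"
    using k local_at_uminus[OF local_inv_qint[of k]] by simp
  then show ?thesis
    using cong_at_mult[OF W D local_qvar_powi] unfolding D_def by simp
qed

lemma cong_lead_harmonic_pair:
  "cong_at (Phi3 a) 1 (lead_term k * qharmonic k + lead_term (3 ^ a - k) * qharmonic (3 ^ a - k))
     (- pair_Y k)"
proof -
  define F where "F = qvar powi (3 ^ a * (psi_quot k - mid_shift k)) * (1 / (qint (3 ^ a) - qint k))"
  define M where "M = (of_int (mid_shift k) :: rfun)"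
  define Y where "Y = M * (1 - qvar) + (qharmonic k + 1 / qint k)"
  define C where "C = pair_coef k"
  have qk: "qint k \<noteq> 0" using k by (simp add: qint_ne0)
  have locF: "local_at (Phi3 a) F"
    unfolding F_def by (intro local_at_mult local_qvar_powi local_inv_qint_diff)
  have F: "cong_at (Phi3 a) 1 F (- 1 / qint k)"
    unfolding F_def by (rule cong_reflected_factor)
  have "local_at (Phi3 a) (qharmonic k)"
    unfolding qharmonic_def using k by (intro local_at_sum local_inv_qint) auto
  then have locY: "local_at (Phi3 a) Y"
    unfolding Y_def M_def using k
    by (intro local_at_add local_at_mult local_at_of_int local_at_diff local_at_1 local_at_qvar
        local_inv_qint) simp_all
  have H: "cong_at (Phi3 a) 1 (qharmonic (3 ^ a - k)) Y"
    unfolding Y_def M_def mid_shift_def by (rule cong_qharmonic_reflect[OF k])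
  have "lead_term k * qharmonic k + lead_term (3 ^ a - k) * qharmonic (3 ^ a - k)
      = C / qint k * qharmonic k + C * (F * qharmonic (3 ^ a - k))"
    unfolding lead_term_eq lead_term_reflect F_def C_def by (simp add: mult_ac)
  also have "cong_at (Phi3 a) 1 \<dots> (C / qint k * qharmonic k + C * (- 1 / qint k * Y))"
    using locF locY local_pair_coef unfolding C_def
    by (intro cong_at_add cong_at_refl cong_at_mult_left cong_at_mult[OF F H])
  also have "\<dots> = - (C * (1 + M * (1 - qvar ^ k)) / qint k ^ 2)"
    unfolding Y_def by (rule harmonic_pair_identity[OF qk qint_geom])
  finally show ?thesis unfolding C_def M_def pair_Y_def .
qed

text \<open>A pair of summands modulo \<open>Phi3 a ^ 3\<close>, in terms of the two halves of the pairing
  (\<open>T = [2 \<cdot> 3^a]_q\<close> is \<open>\<equiv> 0\<close> modulo \<open>Phi3 a\<close>, so the halves need precision 2 and 1).\<close>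
lemma cong_summand_pair_halves:
  defines "T \<equiv> qint (2 * 3 ^ a)"
  shows "cong_at (Phi3 a) 3
     (coef_sum k * qbinom (2 * 3 ^ a) k + coef_sum (3 ^ a - k) * qbinom (2 * 3 ^ a) (3 ^ a - k))
     ((- qint (3 ^ a) * pair_X k) * T - (- pair_Y k) * (T * T))"
proof -
  have T: "cong_at (Phi3 a) 1 T 0" unfolding T_def by (rule cong_qint_2_3a)
  have TT: "cong_at (Phi3 a) 2 (T * T) 0"
    using cong_at_mult_zero[OF T T] by (simp add: numeral_2_eq_2)
  have three: "(2::nat) + 1 = 3" "(1::nat) + 2 = 3" by simp_all
  have "cong_at (Phi3 a) 3
      (coef_sum k * qbinom (2 * 3 ^ a) k + coef_sum (3 ^ a - k) * qbinom (2 * 3 ^ a) (3 ^ a - k))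
      ((T * lead_term k - T * T * (lead_term k * qharmonic k))
        + (T * lead_term (3 ^ a - k) - T * T * (lead_term (3 ^ a - k) * qharmonic (3 ^ a - k))))"
    unfolding T_def lead_term_def using k
    by (intro cong_at_add cong_summand local_coef_sum) simp_all
  also have "\<dots> = (lead_term k + lead_term (3 ^ a - k)) * T
      - (lead_term k * qharmonic k + lead_term (3 ^ a - k) * qharmonic (3 ^ a - k)) * (T * T)"
    by (rule regroup_pair)
  also have "cong_at (Phi3 a) 3 \<dots> ((- qint (3 ^ a) * pair_X k) * T - (- pair_Y k) * (T * T))"
    using cong_at_diff[OF cong_at_mult_zero[OF cong_lead_pair T, unfolded three]
        cong_at_mult_zero[OF cong_lead_harmonic_pair TT, unfolded three]] .
  finally show ?thesis .
qed

text \<open>A pair of summands adds up to \<open>2 [3^a]_q^2 R_k\<close> modulo \<open>Phi3 a ^ 3\<close>: writing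
  \<open>[2 \<cdot> 3^a]_q = t (2 + (q - 1) t)\<close> with \<open>t = [3^a]_q\<close>, the halves give
  \<open>2 t^2 (2 Y_k - X_k)\<close> plus a multiple of \<open>t^3\<close>.\<close>
lemma cong_summand_pair:
  "cong_at (Phi3 a) 3
     (coef_sum k * qbinom (2 * 3 ^ a) k + coef_sum (3 ^ a - k) * qbinom (2 * 3 ^ a) (3 ^ a - k))
     (2 * qint (3 ^ a) ^ 2 * pair_R k)"
proof -
  define t where "t = qint (3 ^ a)"
  have qN: "qvar ^ 3 ^ a = 1 + (qvar - 1) * qint (3 ^ a)"
    using qint_geom[of "3 ^ a"] by (simp add: algebra_simps)
  have T_eq: "qint (2 * 3 ^ a) = t * (2 + (qvar - 1) * t)"
    unfolding t_def qint_double qN by (simp add: algebra_simps)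
  have inv: "local_at (Phi3 a) (pair_coef k * (1 / qint k) ^ 2)"
    using k by (intro local_at_mult local_at_power local_pair_coef local_inv_qint) simp_all
  have "pair_X k = pair_coef k * (1 / qint k) ^ 2 * (1 - of_int (psi_quot k - mid_shift k) * (1 - qvar ^ k))"
    and "pair_Y k = pair_coef k * (1 / qint k) ^ 2 * (1 + of_int (mid_shift k) * (1 - qvar ^ k))"
    unfolding pair_X_def pair_Y_def by (simp_all add: power_one_over)
  then have "local_at (Phi3 a) (pair_X k)" "local_at (Phi3 a) (pair_Y k)"
    by (simp_all only:) (intro local_at_mult local_at_add local_at_diff inv local_at_1 local_at_of_int
        local_at_power local_at_qvar)+
  then have Q: "local_at (Phi3 a) ((qvar - 1) * (- pair_X k + (4 + (qvar - 1) * t) * pair_Y k))"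
    unfolding t_def by (intro local_at_mult local_at_add local_at_diff local_at_uminus) simp_all
  have "cong_at (Phi3 a) 3
     (coef_sum k * qbinom (2 * 3 ^ a) k + coef_sum (3 ^ a - k) * qbinom (2 * 3 ^ a) (3 ^ a - k))
     ((- t * pair_X k) * qint (2 * 3 ^ a) - (- pair_Y k) * (qint (2 * 3 ^ a) * qint (2 * 3 ^ a)))"
    unfolding t_def by (rule cong_summand_pair_halves)
  also have "(- t * pair_X k) * qint (2 * 3 ^ a) - (- pair_Y k) * (qint (2 * 3 ^ a) * qint (2 * 3 ^ a))
      = 2 * t ^ 2 * (2 * pair_Y k - pair_X k)
        + t * t * t * ((qvar - 1) * (- pair_X k + (4 + (qvar - 1) * t) * pair_Y k))"
    unfolding T_eq by (rule expand_pair)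
  also have "cong_at (Phi3 a) 3 \<dots> (2 * t ^ 2 * (2 * pair_Y k - pair_X k) + 0)"
    unfolding t_def by (intro cong_at_add cong_at_refl cong_qint_3a_cube[OF Q[unfolded t_def]])
  also have "2 * pair_Y k - pair_X k = pair_R k"
    unfolding pair_X_def pair_Y_def pair_R_def of_int_diff of_int_add by (rule combine_pair)
  finally show ?thesis unfolding t_def by simp
qed

lemma rhs_summand_eq:
  "pair_R k = qvar powi (\<psi> (int k) - int (k * (k - 1) div 2)) * (-1) ^ (k - 1) / qint k ^ 2
     * (1 + rconst (of_int (\<psi> (3 ^ a - int k) - \<psi> (int k)) / 3 ^ a
                    + (3 ^ a - 1) / 2 - of_nat k) * (1 - qvar ^ k))"
proof -
  have psi: "\<psi> (3 ^ a - int k) - \<psi> (int k) = 3 ^ a * psi_quot k"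
    using psi_reflect[of k] unfolding psi_quot_def by simp
  have "2 * ((3 ^ a - 1) div 2) = (3 ^ a - 1 :: int)" by simp
  then have "(2 :: rat) * of_int ((3 ^ a - 1) div 2) = 3 ^ a - 1"
    by (metis of_int_1 of_int_diff of_int_mult of_int_numeral of_int_power)
  then have half: "((3 ^ a - 1) / 2 :: rat) = of_int ((3 ^ a - 1) div 2)"
    by (simp add: field_simps)
  have rat: "(of_int (\<psi> (3 ^ a - int k) - \<psi> (int k)) / 3 ^ a + (3 ^ a - 1) / 2 - of_nat k :: rat)
      = of_int (psi_quot k + mid_shift k)"
    unfolding psi half mid_shift_def by simp
  have pw: "qvar powi (\<psi> (int k) - int (k * (k - 1) div 2)) = qtri k * qvar powi \<psi> (int k)"
    unfolding qtri_def qvar_powi_add by simp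
  show ?thesis
    unfolding pair_R_def rat pw rconst_of_int pair_coef_def by (simp add: divide_inverse mult_ac)
qed

end

lemma cong_sum:
  "cong_at (Phi3 a) 3
     (\<Sum>k\<in>{1..3 ^ a - 1}. qvar powi (\<psi> (int k)) * of_int (Legendre (int k) 3) * qbinom (2 * 3 ^ a) k)
     (2 * qint (3 ^ a) ^ 2 *
      (\<Sum>k\<in>{k. 1 \<le> k \<and> k \<le> 3 ^ a - 1 \<and> k mod 3 = 1}.
        qvar powi (\<psi> (int k) - int (k * (k - 1) div 2)) * (-1) ^ (k - 1) / qint k ^ 2
        * (1 + rconst (of_int (\<psi> (3 ^ a - int k) - \<psi> (int k)) / 3 ^ a
                       + (3 ^ a - 1) / 2 - of_nat k) * (1 - qvar ^ k))))"
proof -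
  define K where "K = {k. 1 \<le> k \<and> k \<le> 3 ^ a - 1 \<and> k mod 3 = (1::nat)}"
  have K: "1 \<le> k" "k < 3 ^ a" "k mod 3 = 1" if "k \<in> K" for k
    using that unfolding K_def by auto
  have split: "(\<Sum>k\<in>{1..3 ^ a - 1}. coef_sum k * qbinom (2 * 3 ^ a) k)
      = (\<Sum>k\<in>K. coef_sum k * qbinom (2 * 3 ^ a) k + coef_sum (3 ^ a - k) * qbinom (2 * 3 ^ a) (3 ^ a - k))"
    unfolding K_def using a_pos by (intro sum_pair_mod3) (simp_all add: coef_sum_def Legendre_3)
  have pairs: "cong_at (Phi3 a) 3
      (\<Sum>k\<in>K. coef_sum k * qbinom (2 * 3 ^ a) k + coef_sum (3 ^ a - k) * qbinom (2 * 3 ^ a) (3 ^ a - k))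
      (\<Sum>k\<in>K. 2 * qint (3 ^ a) ^ 2 * pair_R k)"
    by (intro cong_at_sum cong_summand_pair[OF K(1-3)])
  have distrib: "(\<Sum>k\<in>K. 2 * qint (3 ^ a) ^ 2 * pair_R k) = 2 * qint (3 ^ a) ^ 2 * (\<Sum>k\<in>K. pair_R k)"
    by (rule sum_distrib_left[symmetric])
  have rhs: "(\<Sum>k\<in>K. pair_R k) = (\<Sum>k\<in>K. qvar powi (\<psi> (int k) - int (k * (k - 1) div 2)) * (-1) ^ (k - 1)
      / qint k ^ 2 * (1 + rconst (of_int (\<psi> (3 ^ a - int k) - \<psi> (int k)) / 3 ^ a
                                   + (3 ^ a - 1) / 2 - of_nat k) * (1 - qvar ^ k)))"
    by (rule sum.cong[OF refl rhs_summand_eq[OF K]])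
  show ?thesis
    using pairs[folded split, unfolded distrib rhs] unfolding coef_sum_def K_def .
qed

end

end

theorem lemma3p2:
  fixes a :: nat and \<psi> :: "int \<Rightarrow> int"
  assumes a_pos: "a > 0"
    and sym: "\<And>k. [\<psi> k = \<psi> (- k)] (mod 3 ^ a)"
    and per: "\<And>k j. j \<in> {1..a} \<Longrightarrow> [\<psi> (k + 3 ^ j) = \<psi> k] (mod 3 ^ j)"
  shows "qcong_mod
    (1 / (2 * qint (3 ^ a) ^ 2) *
       (\<Sum>k\<in>{1..3 ^ a - 1}. qvar powi (\<psi> (int k)) * of_int (Legendre (int k) 3)
            * qbinom (2 * 3 ^ a) k))
    (\<Sum>k\<in>{k. 1 \<le> k \<and> k \<le> 3 ^ a - 1 \<and> k mod 3 = 1}.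
        qvar powi (\<psi> (int k) - int (k * (k - 1) div 2)) * (-1) ^ (k - 1) / qint k ^ 2
        * (1 + rconst (of_int (\<psi> (3 ^ a - int k) - \<psi> (int k)) / 3 ^ a
                       + (3 ^ a - 1) / 2 - of_nat k) * (1 - qvar ^ k)))
    (Phi3 a)"
proof -
  have reflect: "3 ^ a dvd \<psi> (3 ^ a - int k) - \<psi> (int k)" for k :: nat
    using a_pos by (intro reflection_dvd sym per) auto
  show ?thesis
    by (intro qcong_mod_if_cong_at cancel_two_qint_3a_squared[OF a_pos] cong_sum[OF a_pos reflect])
qed

end
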